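(* Let $(A,C,\mathbb B)$ be a local contact algebra and $\mathfrak u$ a bounded ultrafilter in $A$ (i.e. $\mathfrak u\cap\mathbb B\ne\emptyset$). Then $\{a\in A\mid \forall b\in\mathfrak u: a\,C\,b\}=\{a\in A\mid\forall b\in\mathfrak u: a\,C_{\mathrm{Al}}\,b\}$; that is, $\mathfrak c_{\mathfrak u}=\{a\in A\mid\forall b\in\mathfrak u:\ a\,C\,b\}$.
   Context: A local contact algebra $(A,C,\mathbb B)$ is a Boolean algebra with a contact relation $C$ ($a\,C\,a$ for $a>0$; $a\,C\,b\Rightarrow a,b>0$; symmetric; $a\,C\,(b\vee c)$ iff $a\,C\,b$ or $a\,C\,c$; $a\ll b$ iff not $a\,C\,b^*$) and an ideal $\mathbb B$ of bounded elements with (BC1) $a\ll c$, $a\in\mathbb B\Rightarrow a\ll b\ll c$ for some $b\in\mathbb B$; (BC2) $a\,C\,b\Rightarrow a\,C\,(c\wedge b)$ for some $c\in\mathbb B$; (BC3) each $a\neq0$ has $0\ne b\in\mathbb B$ with $b\ll a$. The Alexandroff extension is $a\,C_{\mathrm{Al}}\,b$ iff ($a\,C\,b$ or $a,b\in A\setminus\mathbb B$); $(A,C_{\mathrm{Al}})$ is a normal contact algebra, and $\mathfrak c_{\mathfrak u}=\{a\in A\mid\forall b\in\mathfrak u: a\,C_{\mathrm{Al}}\,b\}$ is the cluster in $(A,C_{\mathrm{Al}})$ generated by $\mathfrak u$. *)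

theory Defs
  imports Main
begin

definition contact_rel :: "('a::boolean_algebra \<Rightarrow> 'a \<Rightarrow> bool) \<Rightarrow> bool" where
  "contact_rel C \<longleftrightarrow>
     (\<forall>a. a \<noteq> bot \<longrightarrow> C a a) \<and>
     (\<forall>a b. C a b \<longrightarrow> a \<noteq> bot \<and> b \<noteq> bot) \<and>
     (\<forall>a b. C a b \<longrightarrow> C b a) \<and>
     (\<forall>a b c. C a (sup b c) \<longleftrightarrow> C a b \<or> C a c)"

definition ll :: "('a::boolean_algebra \<Rightarrow> 'a \<Rightarrow> bool) \<Rightarrow> 'a \<Rightarrow> 'a \<Rightarrow> bool" where
  "ll C a b \<longleftrightarrow> \<not> C a (- b)"

definition is_ideal :: "'a::boolean_algebra set \<Rightarrow> bool" where
  "is_ideal I \<longleftrightarrow> bot \<in> I \<and> (\<forall>a b. a \<in> I \<longrightarrow> b \<le> a \<longrightarrow> b \<in> I) \<and>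
     (\<forall>a b. a \<in> I \<longrightarrow> b \<in> I \<longrightarrow> sup a b \<in> I)"

definition local_contact_algebra ::
  "('a::boolean_algebra \<Rightarrow> 'a \<Rightarrow> bool) \<Rightarrow> 'a set \<Rightarrow> bool" where
  "local_contact_algebra C B \<longleftrightarrow>
     contact_rel C \<and> is_ideal B \<and>
     (\<forall>a c. a \<in> B \<longrightarrow> ll C a c \<longrightarrow> (\<exists>b\<in>B. ll C a b \<and> ll C b c)) \<and>
     (\<forall>a b. C a b \<longrightarrow> (\<exists>c\<in>B. C a (inf c b))) \<and>
     (\<forall>a. a \<noteq> bot \<longrightarrow> (\<exists>b\<in>B. b \<noteq> bot \<and> ll C b a))"

definition is_filter :: "'a::boolean_algebra set \<Rightarrow> bool" where
  "is_filter F \<longleftrightarrow> top \<in> F \<and> (\<forall>a b. a \<in> F \<longrightarrow> a \<le> b \<longrightarrow> b \<in> F) \<and>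
     (\<forall>a b. a \<in> F \<longrightarrow> b \<in> F \<longrightarrow> inf a b \<in> F)"

definition is_ultrafilter :: "'a::boolean_algebra set \<Rightarrow> bool" where
  "is_ultrafilter U \<longleftrightarrow> is_filter U \<and> bot \<notin> U \<and>
     (\<forall>F. is_filter F \<longrightarrow> bot \<notin> F \<longrightarrow> U \<subseteq> F \<longrightarrow> F = U)"

definition C_Al :: "('a::boolean_algebra \<Rightarrow> 'a \<Rightarrow> bool) \<Rightarrow> 'a set \<Rightarrow> 'a \<Rightarrow> 'a \<Rightarrow> bool" where
  "C_Al C B a b \<longleftrightarrow> C a b \<or> (a \<notin> B \<and> b \<notin> B)"

end

theory Submission
  imports Defs
begin

text \<open>If \<open>b\<^sub>0\<close> is a bounded member of the filter, then for every member \<open>b\<close> the meet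
  \<open>b \<sqinter> b\<^sub>0\<close> is a bounded member as well, so the Alexandroff contact with it is the original
  contact; monotonicity of contact lifts this from \<open>b \<sqinter> b\<^sub>0\<close> to \<open>b\<close>.\<close>

lemma contact_mono_right:
  assumes "contact_rel C" and "C a b" and "b \<le> c"
  shows "C a c"
proof -
  have "c = sup b c" using \<open>b \<le> c\<close> by (simp add: sup_absorb2)
  then show ?thesis using assms(1,2) unfolding contact_rel_def by metis
qed

lemma C_Al_bounded_iff:
  assumes "b \<in> B"
  shows "C_Al C B a b \<longleftrightarrow> C a b"
  using assms unfolding C_Al_def by blast

lemma contact_cluster_eq_C_Al_cluster:
  assumes contact: "contact_rel C" and ideal: "is_ideal B" and filter: "is_filter F"
    and bounded: "b\<^sub>0 \<in> F" "b\<^sub>0 \<in> B"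
  shows "{a. \<forall>b\<in>F. C a b} = {a. \<forall>b\<in>F. C_Al C B a b}"
proof -
  have "C a b" if Al: "\<forall>b\<in>F. C_Al C B a b" and "b \<in> F" for a b
  proof -
    have "inf b b\<^sub>0 \<in> F" using filter \<open>b \<in> F\<close> bounded(1) unfolding is_filter_def by blast
    moreover have "inf b b\<^sub>0 \<in> B" using ideal bounded(2) unfolding is_ideal_def by (meson inf_le2)
    ultimately have "C a (inf b b\<^sub>0)" using Al C_Al_bounded_iff by blast
    then show "C a b" using contact contact_mono_right inf_le1 by blast
  qed
  then show ?thesis unfolding C_Al_def by auto
qed

theorem lemma4p3:
  fixes C :: "'a::boolean_algebra \<Rightarrow> 'a \<Rightarrow> bool" and B :: "'a set" and U :: "'a set"
  assumes "local_contact_algebra C B"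
    and "is_ultrafilter U"
    and "U \<inter> B \<noteq> {}"
  shows "{a. \<forall>b\<in>U. C a b} = {a. \<forall>b\<in>U. C_Al C B a b}"
proof -
  have "contact_rel C" and "is_ideal B"
    using assms(1) unfolding local_contact_algebra_def by auto
  moreover have "is_filter U" using assms(2) unfolding is_ultrafilter_def by auto
  moreover obtain b\<^sub>0 where "b\<^sub>0 \<in> U" "b\<^sub>0 \<in> B" using assms(3) by auto
  ultimately show ?thesis by (rule contact_cluster_eq_C_Al_cluster)
qed

end
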